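(* Let $\nu\in\mathcal{P}(\Omega)$ be absolutely continuous, and for each $N\in\mathbb{N}^*$ let $(\mathcal{A},X)$ be a tagged partition of $\Omega$ associated with $\nu$, with $X=(x_1,\dots,x_N)$, and $\nu^E_X=\frac1N\sum_{i=1}^N\delta_{x_i}$. (1) For every function $f$ on $\Omega$ with compact support that is bounded and $\nu$-almost everywhere continuous, $\int_\Omega f\,d(\nu-\nu^E_X)=\int_\Omega f\,d\nu-\frac1N\sum_{i=1}^Nf(x_i)=o(1)$ as $N\to+\infty$. Consequently $\nu^E_X$ converges weakly to $\nu$, and $W_1(\nu^E_X,\nu)=o(1)$ as $N\to+\infty$ if moreover $\Omega$ has compact closure. (2) For every $\alpha\in(0,1]$, $N\in\mathbb{N}^*$ and every compactly supported $f\in\mathscr{C}^{0,\alpha}(\Omega)$, $\big|\int_\Omega f\,d\nu-\frac1N\sum_{i=1}^Nf(x_i)\big|\le\frac{C_\Omega^\alpha}{N^\alpha}\operatorname{Hol}_\alpha(f)$. In particular $W_1(\nu^E_X,\nu)\le\frac{C_\Omega}N$.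
   Context: $(\Omega,d_\Omega)$ is a complete metric space carrying a Lebesgue-type reference measure for absolute continuity. A tagged partition of $\Omega$ associated with $\nu$: disjoint subsets $\Omega_1,\dots,\Omega_N$ with union $\Omega$, $\nu(\Omega_i)=1/N$, $\mathrm{diam}(\Omega_i)\le C_\Omega/N$ for a constant $C_\Omega>0$ independent of $N$, and points $x_i\in\Omega_i$. $\operatorname{Hol}_\alpha(f)=\sup_{x\ne x'}|f(x)-f(x')|/d_\Omega(x,x')^\alpha$; $W_1$ is the 1-Wasserstein distance. *)

theory Defs
  imports "HOL-Probability.Probability"
begin

text \<open>Tagged partition (A,X) of the whole space (Omega = UNIV of the metric type)
  associated with nu, with N cells indexed by i < N, diameter bound C/N.\<close>
definition tagged_partition ::
  "'a::metric_space measure \<Rightarrow> real \<Rightarrow> nat \<Rightarrow> (nat \<Rightarrow> 'a set) \<Rightarrow> (nat \<Rightarrow> 'a) \<Rightarrow> bool" where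
  "tagged_partition \<nu> C N A X \<longleftrightarrow>
     (\<forall>i<N. A i \<in> sets \<nu> \<and> measure \<nu> (A i) = 1 / real N \<and> X i \<in> A i
             \<and> (\<forall>x\<in>A i. \<forall>y\<in>A i. dist x y \<le> C / real N))
   \<and> (\<forall>i<N. \<forall>j<N. i \<noteq> j \<longrightarrow> A i \<inter> A j = {})
   \<and> (\<Union>i<N. A i) = UNIV"

definition empirical_measure :: "nat \<Rightarrow> (nat \<Rightarrow> 'a::topological_space) \<Rightarrow> 'a measure" where
  "empirical_measure N X =
     measure_of UNIV (sets borel)
       (\<lambda>S. ennreal ((\<Sum>i<N. indicator S (X i)) / real N))"

text \<open>Hoelder seminorm; the supremum of the empty set is taken to be 0.\<close>
definition Hol :: "real \<Rightarrow> ('a::metric_space \<Rightarrow> real) \<Rightarrow> real" where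
  "Hol \<alpha> f = Sup (insert 0 {\<bar>f x - f y\<bar> / dist x y powr \<alpha> | x y. x \<noteq> y})"

definition holder_continuous :: "real \<Rightarrow> ('a::metric_space \<Rightarrow> real) \<Rightarrow> bool" where
  "holder_continuous \<alpha> f \<longleftrightarrow> bdd_above {\<bar>f x - f y\<bar> / dist x y powr \<alpha> | x y. x \<noteq> y}"

definition compact_support :: "('a::metric_space \<Rightarrow> real) \<Rightarrow> bool" where
  "compact_support f \<longleftrightarrow> compact (closure {x. f x \<noteq> 0})"

definition coupling :: "'a measure \<Rightarrow> 'a measure \<Rightarrow> ('a \<times> 'a) measure \<Rightarrow> bool" where
  "coupling \<mu> \<nu> \<gamma> \<longleftrightarrow> sets \<gamma> = sets (\<mu> \<Otimes>\<^sub>M \<nu>) \<and> prob_space \<gamma>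
     \<and> distr \<gamma> \<mu> fst = \<mu> \<and> distr \<gamma> \<nu> snd = \<nu>"

definition W1 :: "'a::metric_space measure \<Rightarrow> 'a measure \<Rightarrow> ennreal" where
  "W1 \<mu> \<nu> = (INF \<gamma> \<in> {\<gamma>. coupling \<mu> \<nu> \<gamma>}. \<integral>\<^sup>+ p. ennreal (dist (fst p) (snd p)) \<partial>\<gamma>)"

definition weak_conv :: "(nat \<Rightarrow> 'a::topological_space measure) \<Rightarrow> 'a measure \<Rightarrow> bool" where
  "weak_conv \<mu>s \<mu> \<longleftrightarrow> (\<forall>f::'a \<Rightarrow> real. continuous_on UNIV f \<and> bounded (range f) \<longrightarrow>
      (\<lambda>n. integral\<^sup>L (\<mu>s n) f) \<longlonglongrightarrow> integral\<^sup>L \<mu> f)"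

end

theory Submission
  imports Defs
begin

text \<open>Send every point to the tag of its cell. This map \<open>T\<^sub>N\<close> pushes \<open>\<nu>\<close> forward to the
  empirical measure and moves no point by more than \<open>C/N\<close>. Hence the quadrature error is
  \<open>\<integral> f - f \<circ> T\<^sub>N d\<nu>\<close>: for \<open>\<alpha>\<close>-Hoelder \<open>f\<close> it is pointwise at most \<open>Hol\<^sub>\<alpha>(f) (C/N)\<^sup>\<alpha>\<close>, and for
  bounded \<open>f\<close> continuous \<open>\<nu>\<close>-a.e. it tends to 0 by dominated convergence, since
  \<open>T\<^sub>N x \<rightarrow> x\<close>. The coupling of the empirical measure with \<open>\<nu>\<close> given by \<open>x \<mapsto> (T\<^sub>N x, x)\<close>
  costs at most \<open>C/N\<close>, which bounds \<open>W\<^sub>1\<close>.\<close>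

definition cell_tag :: "nat \<Rightarrow> (nat \<Rightarrow> 'a set) \<Rightarrow> (nat \<Rightarrow> 'a) \<Rightarrow> 'a \<Rightarrow> 'a" where
  "cell_tag N A X x = X (SOME i. i < N \<and> x \<in> A i)"

lemma tagged_partitionD:
  assumes "tagged_partition \<nu> C N A X" "i < N"
  shows "A i \<in> sets \<nu>" "measure \<nu> (A i) = 1 / real N" "X i \<in> A i"
    and "\<And>x y. x \<in> A i \<Longrightarrow> y \<in> A i \<Longrightarrow> dist x y \<le> C / real N"
  using assms unfolding tagged_partition_def by auto

lemma tagged_partition_cellE:
  assumes "tagged_partition \<nu> C N A X"
  obtains i where "i < N" "x \<in> A i"
  using assms unfolding tagged_partition_def by blast

lemma cell_tag_eq:
  assumes part: "tagged_partition \<nu> C N A X" and "i < N" "x \<in> A i"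
  shows "cell_tag N A X x = X i"
proof -
  have "(SOME j. j < N \<and> x \<in> A j) = i"
  proof (rule some_equality)
    show "\<And>j. j < N \<and> x \<in> A j \<Longrightarrow> j = i"
      using part assms(2,3) unfolding tagged_partition_def by blast
  qed (use assms in simp)
  then show ?thesis unfolding cell_tag_def by simp
qed

lemma tagged_partition_pos:
  assumes "tagged_partition \<nu> C N A X"
  shows "N \<ge> 1" "C \<ge> 0"
proof -
  obtain i where i: "i < N" "undefined \<in> A i" using tagged_partition_cellE[OF assms] .
  then show "N \<ge> 1" by simp
  have "0 \<le> C / real N"
    using tagged_partitionD(3)[OF assms i(1)] tagged_partitionD(4)[OF assms i(1), of "X i" "X i"]
    by simp
  with \<open>N \<ge> 1\<close> show "C \<ge> 0" by (simp add: zero_le_divide_iff)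
qed

lemma dist_cell_tag_le:
  assumes "tagged_partition \<nu> C N A X"
  shows "dist (cell_tag N A X x) x \<le> C / real N"
proof -
  obtain i where "i < N" "x \<in> A i" using tagged_partition_cellE[OF assms] .
  then show ?thesis
    using assms by (simp add: cell_tag_eq tagged_partitionD)
qed

lemma space_tagged_partition:
  assumes "tagged_partition \<nu> C N A X"
  shows "space \<nu> = UNIV"
proof -
  have "(\<Union>i<N. A i) \<subseteq> space \<nu>"
    using tagged_partitionD(1)[OF assms] sets.sets_into_space by blast
  then show ?thesis using assms unfolding tagged_partition_def by auto
qed

lemma emeasure_tagged_partition_cell:
  assumes "tagged_partition \<nu> C N A X" "i < N"
  shows "emeasure \<nu> (A i) = ennreal (1 / real N)"
proof -
  have "measure \<nu> (A i) \<noteq> 0"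
    using tagged_partitionD(2)[OF assms] tagged_partition_pos(1)[OF assms(1)] by simp
  then have "emeasure \<nu> (A i) \<noteq> \<top>" using measure_zero_top by blast
  then show ?thesis
    using tagged_partitionD(2)[OF assms] by (simp add: emeasure_eq_ennreal_measure)
qed

lemma prob_space_tagged_partition:
  assumes part: "tagged_partition \<nu> C N A X"
  shows "prob_space \<nu>"
proof
  have "emeasure \<nu> (space \<nu>) = emeasure \<nu> (\<Union>i<N. A i)"
    using part space_tagged_partition[OF part] unfolding tagged_partition_def by simp
  also have "\<dots> = (\<Sum>i<N. emeasure \<nu> (A i))"
    using part by (intro sum_emeasure[symmetric])
      (auto simp: tagged_partition_def disjoint_family_on_def)
  also have "\<dots> = (\<Sum>i<N. ennreal (1 / real N))"
    using emeasure_tagged_partition_cell[OF part] by simp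
  also have "\<dots> = 1"
    using tagged_partition_pos(1)[OF part] by (simp add: ennreal_of_nat_eq_real_of_nat ennreal_mult[symmetric])
  finally show "emeasure \<nu> (space \<nu>) = 1" .
qed

lemma measurable_cell_tag:
  assumes part: "tagged_partition \<nu> C N A X" and "space M = UNIV"
  shows "cell_tag N A X \<in> \<nu> \<rightarrow>\<^sub>M M"
proof (rule measurableI)
  fix S assume "S \<in> sets M"
  have "cell_tag N A X -` S \<inter> space \<nu> = (\<Union>i\<in>{i. i < N \<and> X i \<in> S}. A i)"
  proof safe
    fix x assume "cell_tag N A X x \<in> S"
    moreover obtain i where "i < N" "x \<in> A i" using tagged_partition_cellE[OF part] .
    ultimately show "x \<in> (\<Union>i\<in>{i. i < N \<and> X i \<in> S}. A i)"
      using cell_tag_eq[OF part] by auto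
  qed (use cell_tag_eq[OF part] space_tagged_partition[OF part] in auto)
  also have "\<dots> \<in> sets \<nu>" using tagged_partitionD(1)[OF part] by auto
  finally show "cell_tag N A X -` S \<inter> space \<nu> \<in> sets \<nu>" .
qed (use assms in auto)

lemma cell_tag_eq_sum_indicator:
  fixes f :: "'a::metric_space \<Rightarrow> real"
  assumes part: "tagged_partition \<nu> C N A X"
  shows "f (cell_tag N A X x) = (\<Sum>i<N. f (X i) * indicator (A i) x)"
proof -
  obtain j where j: "j < N" "x \<in> A j" using tagged_partition_cellE[OF part] .
  have "x \<notin> A i" if "i < N" "i \<noteq> j" for i
    using part j that unfolding tagged_partition_def by blast
  then have "(\<Sum>i<N. f (X i) * indicator (A i) x) = (\<Sum>i\<in>{j}. f (X i) * indicator (A i) x)"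
    using j by (intro sum.mono_neutral_right) auto
  then show ?thesis using j cell_tag_eq[OF part j] by simp
qed

lemma
  fixes f :: "'a::metric_space \<Rightarrow> real"
  assumes part: "tagged_partition \<nu> C N A X"
  shows integrable_cell_tag: "integrable \<nu> (\<lambda>x. f (cell_tag N A X x))"
    and integral_cell_tag: "integral\<^sup>L \<nu> (\<lambda>x. f (cell_tag N A X x)) = (\<Sum>i<N. f (X i)) / real N"
proof -
  have cells: "integrable \<nu> (\<lambda>x. f (X i) * indicator (A i) x)" if "i < N" for i
    using emeasure_tagged_partition_cell[OF part that] tagged_partitionD(1)[OF part that]
    by (intro integrable_mult_right integrable_real_indicator) auto
  show "integrable \<nu> (\<lambda>x. f (cell_tag N A X x))"
    unfolding cell_tag_eq_sum_indicator[OF part]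
    by (rule Bochner_Integration.integrable_sum[where f="\<lambda>i x. f (X i) * indicator (A i) x"])
      (use cells in blast)
  have "integral\<^sup>L \<nu> (\<lambda>x. f (cell_tag N A X x))
      = (\<Sum>i<N. integral\<^sup>L \<nu> (\<lambda>x. f (X i) * indicator (A i) x))"
    unfolding cell_tag_eq_sum_indicator[OF part]
    by (rule Bochner_Integration.integral_sum[where f="\<lambda>i x. f (X i) * indicator (A i) x"])
      (use cells in blast)
  also have "\<dots> = (\<Sum>i<N. f (X i) * measure \<nu> (A i))"
    using tagged_partitionD(1)[OF part] emeasure_tagged_partition_cell[OF part]
    by (intro sum.cong) auto
  also have "\<dots> = (\<Sum>i<N. f (X i)) / real N"
    using tagged_partitionD(2)[OF part] by (simp add: sum_divide_distrib)
  finally show "integral\<^sup>L \<nu> (\<lambda>x. f (cell_tag N A X x)) = (\<Sum>i<N. f (X i)) / real N" .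
qed

lemma distr_cell_tag:
  assumes part: "tagged_partition \<nu> C N A X"
  shows "distr \<nu> borel (cell_tag N A X) = empirical_measure N X"
proof -
  interpret prob_space \<nu> using prob_space_tagged_partition[OF part] .
  let ?D = "distr \<nu> borel (cell_tag N A X)"
  have "empirical_measure N X = measure_of UNIV (sets borel) (emeasure ?D)"
    unfolding empirical_measure_def
  proof (rule measure_of_eq)
    fix S :: "'a set" assume "S \<in> sigma_sets UNIV (sets borel)"
    then have S: "S \<in> sets borel" by (metis sets.sigma_sets_eq space_borel)
    have "emeasure ?D S = ennreal (measure \<nu> (cell_tag N A X -` S))"
      using S measurable_cell_tag[OF part] space_tagged_partition[OF part]
      by (simp add: emeasure_distr emeasure_eq_measure)
    also have "measure \<nu> (cell_tag N A X -` S) = integral\<^sup>L \<nu> (\<lambda>x. indicator S (cell_tag N A X x))"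
      by (simp add: space_tagged_partition[OF part] indicator_vimage[symmetric])
    also have "\<dots> = (\<Sum>i<N. indicator S (X i)) / real N"
      by (rule integral_cell_tag[OF part])
    finally show "ennreal ((\<Sum>i<N. indicator S (X i)) / real N) = emeasure ?D S" by simp
  qed auto
  also have "\<dots> = ?D" using measure_of_of_measure[of ?D] by simp
  finally show ?thesis by simp
qed

lemma integral_empirical_measure:
  fixes f :: "'a::metric_space \<Rightarrow> real"
  assumes part: "tagged_partition \<nu> C N A X" and f: "f \<in> borel_measurable borel"
  shows "integral\<^sup>L (empirical_measure N X) f = (\<Sum>i<N. f (X i)) / real N"
  using integral_distr[OF measurable_cell_tag[OF part] f] integral_cell_tag[OF part]
  by (simp add: distr_cell_tag[OF part, symmetric])

lemma coupling_graph_distr: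
  assumes "prob_space M" and T: "T \<in> M \<rightarrow>\<^sub>M N"
  shows "coupling (distr M N T) M (distr M (distr M N T \<Otimes>\<^sub>M M) (\<lambda>x. (T x, x)))"
    (is "coupling ?D M ?\<gamma>")
proof -
  have graph: "(\<lambda>x. (T x, x)) \<in> M \<rightarrow>\<^sub>M ?D \<Otimes>\<^sub>M M"
    using T by (intro measurable_Pair) (auto intro: measurable_ident_sets)
  have "distr ?\<gamma> ?D fst = distr M ?D (\<lambda>x. T x)"
    using graph by (subst distr_distr) (auto simp: comp_def)
  also have "\<dots> = ?D"
    by (rule distr_cong) auto
  finally have "distr ?\<gamma> ?D fst = ?D" .
  moreover have "distr ?\<gamma> M snd = M"
    using graph by (subst distr_distr) (auto simp: comp_def)
  ultimately show ?thesis
    unfolding coupling_def using prob_space.prob_space_distr[OF assms(1) graph] by simp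
qed

lemma W1_empirical_measure_le:
  assumes part: "tagged_partition \<nu> C N A X" and sets_\<nu>: "sets \<nu> = sets borel"
  shows "W1 (empirical_measure N X) \<nu> \<le> ennreal (C / real N)"
proof -
  interpret prob_space \<nu> using prob_space_tagged_partition[OF part] .
  let ?T = "cell_tag N A X" and ?D = "empirical_measure N X"
  define \<gamma> where "\<gamma> = distr \<nu> (?D \<Otimes>\<^sub>M \<nu>) (\<lambda>x. (?T x, x))"
  have T: "?T \<in> \<nu> \<rightarrow>\<^sub>M borel" by (rule measurable_cell_tag[OF part]) simp
  have graph: "(\<lambda>x. (?T x, x)) \<in> \<nu> \<rightarrow>\<^sub>M ?D \<Otimes>\<^sub>M \<nu>"
    using T by (intro measurable_Pair) (auto simp: distr_cell_tag[OF part, symmetric] intro: measurable_ident_sets)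
  have "coupling ?D \<nu> \<gamma>"
    using coupling_graph_distr[OF prob_space_axioms T] unfolding \<gamma>_def distr_cell_tag[OF part] .
  then have W1_le: "W1 ?D \<nu> \<le> (\<integral>\<^sup>+ p. ennreal (dist (fst p) (snd p)) \<partial>\<gamma>)"
    unfolding W1_def by (intro INF_lower) auto
  txt \<open>The distance need not be measurable on the product \<sigma>-algebra, so it is
    bounded by a step function that is.\<close>
  define G where "G = (\<Union>i<N. A i \<times> A i)"
  define g where "g p = (if p \<in> G then ennreal (C / real N) else \<top>)" for p
  have "G \<in> sets (?D \<Otimes>\<^sub>M \<nu>)"
    unfolding G_def using tagged_partitionD(1)[OF part] sets_\<nu>
    by (intro sets.finite_UN) (auto simp: distr_cell_tag[OF part, symmetric])
  then have g: "g \<in> borel_measurable (?D \<Otimes>\<^sub>M \<nu>)"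
    unfolding g_def by (intro measurable_If_set) auto
  have "ennreal (dist (fst p) (snd p)) \<le> g p" for p
    using tagged_partitionD(4)[OF part] by (auto simp: g_def G_def intro: ennreal_leI)
  then have "(\<integral>\<^sup>+ p. ennreal (dist (fst p) (snd p)) \<partial>\<gamma>) \<le> (\<integral>\<^sup>+ p. g p \<partial>\<gamma>)"
    by (intro nn_integral_mono)
  also have "\<dots> = (\<integral>\<^sup>+ x. g (?T x, x) \<partial>\<nu>)"
    unfolding \<gamma>_def by (rule nn_integral_distr[OF graph]) (use g in simp)
  also have "\<dots> = (\<integral>\<^sup>+ x. ennreal (C / real N) \<partial>\<nu>)"
  proof (rule nn_integral_cong)
    fix x
    obtain i where "i < N" "x \<in> A i" using tagged_partition_cellE[OF part] .
    then show "g (?T x, x) = ennreal (C / real N)"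
      using cell_tag_eq[OF part] tagged_partitionD(3)[OF part] by (auto simp: g_def G_def)
  qed
  also have "\<dots> = ennreal (C / real N)" by (simp add: emeasure_space_1)
  finally show ?thesis by (rule order_trans[OF W1_le])
qed

lemma integral_cell_tag_error_le:
  fixes f :: "'a::metric_space \<Rightarrow> real"
  assumes part: "tagged_partition \<nu> C N A X" and f: "f \<in> borel_measurable \<nu>"
    and err: "\<And>x. \<bar>f x - f (cell_tag N A X x)\<bar> \<le> \<epsilon>"
  shows "\<bar>integral\<^sup>L \<nu> f - (\<Sum>i<N. f (X i)) / real N\<bar> \<le> \<epsilon>"
proof -
  interpret prob_space \<nu> using prob_space_tagged_partition[OF part] .
  have fT: "integrable \<nu> (\<lambda>x. f (cell_tag N A X x))" by (rule integrable_cell_tag[OF part])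
  have diff: "integrable \<nu> (\<lambda>x. f x - f (cell_tag N A X x))"
    using f borel_measurable_integrable[OF fT] err by (intro integrable_const_bound[where B=\<epsilon>]) auto
  have "integrable \<nu> (\<lambda>x. (f x - f (cell_tag N A X x)) + f (cell_tag N A X x))"
    using diff fT by (rule Bochner_Integration.integrable_add)
  then have "integrable \<nu> f" by simp
  then have "integral\<^sup>L \<nu> f - (\<Sum>i<N. f (X i)) / real N = integral\<^sup>L \<nu> (\<lambda>x. f x - f (cell_tag N A X x))"
    using fT by (simp add: integral_cell_tag[OF part, symmetric])
  also have "\<bar>\<dots>\<bar> \<le> integral\<^sup>L \<nu> (\<lambda>x. \<bar>f x - f (cell_tag N A X x)\<bar>)"
    using integral_norm_bound[of \<nu> "\<lambda>x. f x - f (cell_tag N A X x)"] by simp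
  also have "\<dots> \<le> integral\<^sup>L \<nu> (\<lambda>_. \<epsilon>)"
    using diff err by (intro integral_mono) auto
  also have "\<dots> = \<epsilon>" by (simp add: prob_space)
  finally show ?thesis .
qed

lemma
  fixes f :: "'a::metric_space \<Rightarrow> real"
  assumes "holder_continuous \<alpha> f"
  shows Hol_nonneg: "0 \<le> Hol \<alpha> f"
    and holder_continuous_bound: "\<bar>f x - f y\<bar> \<le> Hol \<alpha> f * dist x y powr \<alpha>"
proof -
  have bdd: "bdd_above (insert 0 {\<bar>f x - f y\<bar> / dist x y powr \<alpha> | x y. x \<noteq> y})"
    using assms unfolding holder_continuous_def by simp
  show "0 \<le> Hol \<alpha> f" unfolding Hol_def by (rule cSup_upper[OF _ bdd]) simp
  show "\<bar>f x - f y\<bar> \<le> Hol \<alpha> f * dist x y powr \<alpha>"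
  proof (cases "x = y")
    case False
    then have "\<bar>f x - f y\<bar> / dist x y powr \<alpha> \<le> Hol \<alpha> f"
      unfolding Hol_def by (intro cSup_upper[OF _ bdd]) blast
    then show ?thesis using False by (simp add: divide_le_eq)
  qed simp
qed

lemma holder_continuous_imp_isCont:
  fixes f :: "'a::metric_space \<Rightarrow> real"
  assumes "0 < \<alpha>" "holder_continuous \<alpha> f"
  shows "isCont f x"
proof -
  have "((\<lambda>y. dist y x) \<longlongrightarrow> 0) (at x)"
    by (rule tendsto_dist_iff[THEN iffD1]) (rule tendsto_ident_at)
  then have "((\<lambda>y. dist y x powr \<alpha>) \<longlongrightarrow> 0) (at x)"
    using assms(1) by (intro tendsto_zero_powrI) auto
  then have "((\<lambda>y. Hol \<alpha> f * dist y x powr \<alpha>) \<longlongrightarrow> 0) (at x)"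
    by (rule tendsto_mult_right_zero)
  then have "((\<lambda>y. f y - f x) \<longlongrightarrow> 0) (at x)"
    by (rule Lim_null_comparison[rotated])
      (intro always_eventually allI, simp add: holder_continuous_bound[OF assms(2)])
  then show ?thesis unfolding isCont_def by (rule LIM_zero_cancel)
qed

lemma holder_quadrature_error_le:
  fixes f :: "'a::metric_space \<Rightarrow> real"
  assumes part: "tagged_partition \<nu> C N A X" and sets_\<nu>: "sets \<nu> = sets borel"
    and \<alpha>: "0 < \<alpha>" and f: "holder_continuous \<alpha> f"
  shows "\<bar>integral\<^sup>L \<nu> f - (\<Sum>i<N. f (X i)) / real N\<bar> \<le> C powr \<alpha> / real N powr \<alpha> * Hol \<alpha> f"
proof -
  have "continuous_on UNIV f"
    using holder_continuous_imp_isCont[OF \<alpha> f] by (simp add: continuous_at_imp_continuous_on)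
  then have "f \<in> borel_measurable \<nu>"
    using measurable_cong_sets[OF sets_\<nu> refl] borel_measurable_continuous_onI by blast
  moreover have "\<bar>f x - f (cell_tag N A X x)\<bar> \<le> Hol \<alpha> f * (C / real N) powr \<alpha>" for x
  proof -
    have "\<bar>f x - f (cell_tag N A X x)\<bar> \<le> Hol \<alpha> f * dist x (cell_tag N A X x) powr \<alpha>"
      by (rule holder_continuous_bound[OF f])
    also have "\<dots> \<le> Hol \<alpha> f * (C / real N) powr \<alpha>"
      using dist_cell_tag_le[OF part, of x] \<alpha> Hol_nonneg[OF f]
      by (intro mult_left_mono powr_mono2) (auto simp: dist_commute)
    finally show ?thesis .
  qed
  ultimately have "\<bar>integral\<^sup>L \<nu> f - (\<Sum>i<N. f (X i)) / real N\<bar> \<le> Hol \<alpha> f * (C / real N) powr \<alpha>"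
    by (rule integral_cell_tag_error_le[OF part])
  then show ?thesis
    using tagged_partition_pos[OF part] by (simp add: powr_divide mult.commute)
qed

lemma borel_measurable_completion_AE_eq:
  assumes g: "g \<in> borel_measurable M" and eq: "AE x in M. f x = g x"
  shows "f \<in> borel_measurable (completion M)"
proof (rule measurableI)
  fix S :: "'b set" assume S: "S \<in> sets borel"
  have "AE x in completion M. x \<in> g -` S \<inter> space M \<longleftrightarrow> x \<in> f -` S \<inter> space M"
    using eq by (intro AE_completion) auto
  moreover have "g -` S \<inter> space M \<in> sets (completion M)"
    using g S by (auto intro: measurable_sets)
  ultimately show "f -` S \<inter> space (completion M) \<in> sets (completion M)"
    unfolding space_completion by (rule completion.in_sets_AE) auto
qed simp

locale tagged_partition_sequence =
  fixes \<nu> :: "'a::metric_space measure" and C :: real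
    and A :: "nat \<Rightarrow> nat \<Rightarrow> 'a set" and X :: "nat \<Rightarrow> nat \<Rightarrow> 'a"
  assumes partition: "\<And>N. N \<ge> 1 \<Longrightarrow> tagged_partition \<nu> C N (A N) (X N)"
begin

lemma tendsto_cell_tag: "(\<lambda>N. cell_tag N (A N) (X N) x) \<longlonglongrightarrow> x"
proof -
  have "\<forall>\<^sub>F N in sequentially. norm (dist (cell_tag N (A N) (X N) x) x) \<le> C / real N"
    using eventually_ge_at_top[of 1] by eventually_elim (simp add: dist_cell_tag_le[OF partition])
  then have "(\<lambda>N. dist (cell_tag N (A N) (X N) x) x) \<longlonglongrightarrow> 0"
    using lim_const_over_n by (rule Lim_null_comparison)
  then show ?thesis by (rule tendsto_dist_iff[THEN iffD2])
qed

lemma borel_measurable_continuous_off: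
  fixes f :: "'a \<Rightarrow> real"
  assumes Z: "Z \<in> sets \<nu>" and cont: "\<And>x. x \<notin> Z \<Longrightarrow> isCont f x"
  shows "(\<lambda>x. if x \<in> Z then 0 else f x) \<in> borel_measurable \<nu>"
proof (rule borel_measurable_LIMSEQ_metric)
  let ?T = "\<lambda>N. cell_tag (Suc N) (A (Suc N)) (X (Suc N))"
  show "(\<lambda>x. if x \<in> Z then 0 else f (?T N x)) \<in> borel_measurable \<nu>" for N
    using Z borel_measurable_integrable[OF integrable_cell_tag[OF partition, of "Suc N" f]]
    by (intro measurable_If_set measurable_const) auto
  show "(\<lambda>N. if x \<in> Z then 0 else f (?T N x)) \<longlonglongrightarrow> (if x \<in> Z then 0 else f x)" for x
    using cont isCont_tendsto_compose[OF _ LIMSEQ_Suc[OF tendsto_cell_tag]] by auto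
qed

lemma integral_ae_continuous_tendsto:
  fixes f :: "'a \<Rightarrow> real"
  assumes bounded: "bounded (range f)" and ae: "AE x in \<nu>. isCont f x"
  shows "(\<lambda>N. integral\<^sup>L (completion \<nu>) f - (\<Sum>i<N. f (X N i)) / real N) \<longlonglongrightarrow> 0"
proof -
  let ?T = "\<lambda>N. cell_tag (Suc N) (A (Suc N)) (X (Suc N))"
  have part: "tagged_partition \<nu> C (Suc N) (A (Suc N)) (X (Suc N))" for N
    by (simp add: partition)
  interpret prob_space "completion \<nu>"
    using prob_space.prob_space_completion[OF prob_space_tagged_partition[OF part]] .
  have fT: "(\<lambda>x. f (?T N x)) \<in> borel_measurable \<nu>" for N
    using integrable_cell_tag[OF part] by (rule borel_measurable_integrable)
  obtain B where B: "\<And>x. \<bar>f x\<bar> \<le> B" using bounded unfolding bounded_iff by auto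
  obtain Z where Z: "Z \<in> null_sets \<nu>" "\<And>x. x \<notin> Z \<Longrightarrow> isCont f x"
    using ae space_tagged_partition[OF part] by (auto elim!: AE_E)
  have "f \<in> borel_measurable (completion \<nu>)"
    using borel_measurable_continuous_off[of Z f] Z AE_not_in[OF Z(1)]
    by (intro borel_measurable_completion_AE_eq) auto
  moreover have "AE x in completion \<nu>. (\<lambda>N. f (?T N x)) \<longlonglongrightarrow> f x"
    using ae by (intro AE_completion, eventually_elim)
      (rule isCont_tendsto_compose[OF _ LIMSEQ_Suc[OF tendsto_cell_tag]])
  ultimately have "(\<lambda>N. integral\<^sup>L (completion \<nu>) (\<lambda>x. f (?T N x))) \<longlonglongrightarrow> integral\<^sup>L (completion \<nu>) f"
    using B measurable_completion[OF fT] by (intro integral_dominated_convergence[where w="\<lambda>_. B"]) auto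
  moreover have "integral\<^sup>L (completion \<nu>) (\<lambda>x. f (?T N x)) = (\<Sum>i<Suc N. f (X (Suc N) i)) / real (Suc N)" for N
    by (rule trans[OF integral_completion[OF fT] integral_cell_tag[OF part]])
  ultimately have "(\<lambda>N. (\<Sum>i<Suc N. f (X (Suc N) i)) / real (Suc N)) \<longlonglongrightarrow> integral\<^sup>L (completion \<nu>) f"
    by (simp only:)
  then have "(\<lambda>N. (\<Sum>i<N. f (X N i)) / real N) \<longlonglongrightarrow> integral\<^sup>L (completion \<nu>) f"
    by (rule LIMSEQ_imp_Suc)
  from tendsto_diff[OF tendsto_const[of "integral\<^sup>L (completion \<nu>) f"] this] show ?thesis
    by simp
qed

lemma weak_conv_empirical_measure:
  assumes sets_\<nu>: "sets \<nu> = sets borel"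
  shows "weak_conv (\<lambda>N. empirical_measure N (X N)) \<nu>"
  unfolding weak_conv_def
proof (intro allI impI, elim conjE)
  fix f :: "'a \<Rightarrow> real"
  assume cont: "continuous_on UNIV f" and bounded: "bounded (range f)"
  have f: "f \<in> borel_measurable borel" using cont by (rule borel_measurable_continuous_onI)
  have "isCont f x" for x using cont by (simp add: continuous_on_eq_continuous_at)
  then have "(\<lambda>N. integral\<^sup>L (completion \<nu>) f - (\<Sum>i<N. f (X N i)) / real N) \<longlonglongrightarrow> 0"
    using bounded by (intro integral_ae_continuous_tendsto AE_I2) auto
  then have "(\<lambda>N. (\<Sum>i<N. f (X N i)) / real N) \<longlonglongrightarrow> integral\<^sup>L (completion \<nu>) f"
    by (rule Lim_transform2[OF tendsto_const])
  moreover have "integral\<^sup>L (completion \<nu>) f = integral\<^sup>L \<nu> f"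
    using f by (intro integral_completion) (simp add: measurable_cong_sets[OF sets_\<nu> refl])
  ultimately have "(\<lambda>N. (\<Sum>i<N. f (X N i)) / real N) \<longlonglongrightarrow> integral\<^sup>L \<nu> f"
    by simp
  moreover have "\<forall>\<^sub>F N in sequentially. (\<Sum>i<N. f (X N i)) / real N = integral\<^sup>L (empirical_measure N (X N)) f"
    using eventually_ge_at_top[of 1]
    by eventually_elim (simp add: integral_empirical_measure[OF partition f])
  ultimately show "(\<lambda>N. integral\<^sup>L (empirical_measure N (X N)) f) \<longlonglongrightarrow> integral\<^sup>L \<nu> f"
    by (rule Lim_transform_eventually)
qed

lemma W1_empirical_measure_tendsto:
  assumes sets_\<nu>: "sets \<nu> = sets borel"
  shows "(\<lambda>N. W1 (empirical_measure N (X N)) \<nu>) \<longlonglongrightarrow> 0"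
proof (rule tendsto_sandwich[OF _ _ tendsto_const])
  show "\<forall>\<^sub>F N in sequentially. W1 (empirical_measure N (X N)) \<nu> \<le> ennreal (C / real N)"
    using eventually_ge_at_top[of 1]
    by eventually_elim (rule W1_empirical_measure_le[OF partition sets_\<nu>])
  show "(\<lambda>N. ennreal (C / real N)) \<longlonglongrightarrow> 0"
    using tendsto_ennrealI[OF lim_const_over_n[of C]] by simp
qed simp

end

theorem lemma16:
  fixes \<nu> lam :: "'a::{metric_space, complete_space} measure"
    and C :: real
    and A :: "nat \<Rightarrow> nat \<Rightarrow> 'a set"
    and X :: "nat \<Rightarrow> nat \<Rightarrow> 'a"
  assumes prob: "prob_space \<nu>" and sets_nu: "sets \<nu> = sets borel"
    and sets_ref: "sets lam = sets borel"
    and ac: "absolutely_continuous lam \<nu>"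
    and C_pos: "C > 0"
    and part: "\<And>N. N \<ge> 1 \<Longrightarrow> tagged_partition \<nu> C N (A N) (X N)"
  shows
    "(\<forall>f::'a \<Rightarrow> real. compact_support f \<and> bounded (range f) \<and> (AE x in \<nu>. isCont f x) \<longrightarrow>
        (\<lambda>N. integral\<^sup>L (completion \<nu>) f - (\<Sum>i<N. f (X N i)) / real N) \<longlonglongrightarrow> 0)
     \<and> weak_conv (\<lambda>N. empirical_measure N (X N)) \<nu>
     \<and> (compact (UNIV :: 'a set) \<longrightarrow> (\<lambda>N. W1 (empirical_measure N (X N)) \<nu>) \<longlonglongrightarrow> 0)
     \<and> (\<forall>\<alpha>::real. \<forall>N::nat. \<forall>f::'a \<Rightarrow> real.
          0 < \<alpha> \<and> \<alpha> \<le> 1 \<and> N \<ge> 1 \<and> compact_support f \<and> holder_continuous \<alpha> f \<longrightarrow>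
          \<bar>integral\<^sup>L \<nu> f - (\<Sum>i<N. f (X N i)) / real N\<bar>
            \<le> C powr \<alpha> / real N powr \<alpha> * Hol \<alpha> f)
     \<and> (\<forall>N::nat. N \<ge> 1 \<longrightarrow> W1 (empirical_measure N (X N)) \<nu> \<le> ennreal (C / real N))"
proof -
  \<comment> \<open>Only \<open>part\<close> and \<open>sets_nu\<close> are needed: the partitions already make \<open>\<nu>\<close> a probability
    measure and force \<open>C \<ge> 0\<close>, the a.e. continuity refers to \<open>\<nu>\<close> itself, and neither compact
    support nor \<open>\<alpha> \<le> 1\<close> enters the estimates.\<close>
  interpret tagged_partition_sequence \<nu> C A X by unfold_locales (rule part)
  have W1_le: "W1 (empirical_measure N (X N)) \<nu> \<le> ennreal (C / real N)" if "N \<ge> 1" for N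
    by (rule W1_empirical_measure_le[OF part[OF that] sets_nu])
  have holder: "\<bar>integral\<^sup>L \<nu> f - (\<Sum>i<N. f (X N i)) / real N\<bar> \<le> C powr \<alpha> / real N powr \<alpha> * Hol \<alpha> f"
    if "0 < \<alpha>" "N \<ge> 1" "holder_continuous \<alpha> f" for \<alpha> N and f :: "'a \<Rightarrow> real"
    by (rule holder_quadrature_error_le[OF part[OF that(2)] sets_nu that(1,3)])
  show ?thesis
    using integral_ae_continuous_tendsto weak_conv_empirical_measure[OF sets_nu]
      W1_empirical_measure_tendsto[OF sets_nu] holder W1_le
    by blast
qed

end
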